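(* Let $M$ be a finite abelian group of exponent greater than $2$, and let $\mathrm{Half}(L_M)$ be the group of half-automorphisms of $L_M$. Then $$\mathrm{Half}(L_M)=\{F^+_{(f',f'',u,v)},\,F^-_{(f',f'',u,v)} : f'\in\mathrm{Aut}(K),\ f''\in\mathrm{Aut}(M),\ u,v\in M,\ u^2=v^2=1\}.$$ Moreover: (a) if $|M|$ is odd, then $|\mathrm{Half}(L_M)|=2\,|\mathrm{Aut}(K)|\,|\mathrm{Aut}(M)|$; (b) if $|M|$ is even and $M=C_{2i_1}\times\cdots\times C_{2i_s}\times M_1$ with $|M_1|$ odd, $s\geq1$, $i_j\geq 1$, then $|\mathrm{Half}(L_M)|=2^{2s+1}\,|\mathrm{Aut}(K)|\,|\mathrm{Aut}(M)|$.
   Context: $C_n$ denotes the cyclic group of order $n$. Let $K=\{1,a,b,c\}$ be the Klein four-group. Set $L_M=K\times M$ with the operation $(A,x)*(B,y)=(AB,xy)$ if $B=1$, and $(A,x)*(B,y)=(AB,x^{-1}y)$ if $B\neq 1$. For $u,v\in M$ with $u^2=v^2=1$, $\alpha_{(u,v)}:K\to M$ is defined by $\alpha_{(u,v)}(1)=1$, $\alpha_{(u,v)}(a)=u$, $\alpha_{(u,v)}(b)=v$, $\alpha_{(u,v)}(c)=uv$. For $f'\in\mathrm{Aut}(K)$, $f''\in\mathrm{Aut}(M)$ define $F^+_{(f',f'',u,v)}(A,x)=(f'(A),f''(x)\alpha_{(u,v)}(A))$ for all $(A,x)$, and $F^-_{(f',f'',u,v)}(1,x)=(1,f''(x))$,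 $F^-_{(f',f'',u,v)}(A,x)=(f'(A),f''(x^{-1})\alpha_{(u,v)}(A))$ for $A\neq 1$. A half-automorphism of a loop $L$ is a bijection $f:L\to L$ with $f(XY)\in\{f(X)f(Y),f(Y)f(X)\}$ for all $X,Y\in L$. *)

theory Defs
  imports "HOL-Algebra.Algebra"
begin

definition kone :: "bool \<times> bool" where "kone = (False, False)"
definition ka :: "bool \<times> bool" where "ka = (True, False)"
definition kb :: "bool \<times> bool" where "kb = (False, True)"
definition kc :: "bool \<times> bool" where "kc = (True, True)"

definition kmult :: "bool \<times> bool \<Rightarrow> bool \<times> bool \<Rightarrow> bool \<times> bool" where
  "kmult A B = (fst A \<noteq> fst B, snd A \<noteq> snd B)"

definition klein :: "(bool \<times> bool) monoid" where
  "klein = \<lparr>carrier = UNIV, monoid.mult = kmult, one = kone\<rparr>"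

definition Aut :: "('a, 'b) monoid_scheme \<Rightarrow> ('a \<Rightarrow> 'a) set" where
  "Aut G = {f. f \<in> iso G G \<and> f \<in> extensional (carrier G)}"

definition group_exponent :: "('a, 'b) monoid_scheme \<Rightarrow> nat" where
  "group_exponent G = (LEAST n. 0 < n \<and> (\<forall>x\<in>carrier G. x [^]\<^bsub>G\<^esub> n = \<one>\<^bsub>G\<^esub>))"

definition LM :: "('a, 'b) monoid_scheme \<Rightarrow> ((bool \<times> bool) \<times> 'a) monoid" where
  "LM M = \<lparr>carrier = UNIV \<times> carrier M,
           monoid.mult = (\<lambda>(A, x) (B, y). if B = kone then (kmult A B, x \<otimes>\<^bsub>M\<^esub> y)
                                    else (kmult A B, inv\<^bsub>M\<^esub> x \<otimes>\<^bsub>M\<^esub> y)),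
           one = (kone, \<one>\<^bsub>M\<^esub>)\<rparr>"

definition half_aut :: "('a, 'b) monoid_scheme \<Rightarrow> ('a \<Rightarrow> 'a) \<Rightarrow> bool" where
  "half_aut L f \<longleftrightarrow> bij_betw f (carrier L) (carrier L) \<and>
     (\<forall>P\<in>carrier L. \<forall>Q\<in>carrier L.
        f (P \<otimes>\<^bsub>L\<^esub> Q) \<in> {f P \<otimes>\<^bsub>L\<^esub> f Q, f Q \<otimes>\<^bsub>L\<^esub> f P})"

definition Half :: "('a, 'b) monoid_scheme \<Rightarrow> ('a \<Rightarrow> 'a) set" where
  "Half L = {f. half_aut L f \<and> f \<in> extensional (carrier L)}"

definition alpha :: "('a, 'b) monoid_scheme \<Rightarrow> 'a \<Rightarrow> 'a \<Rightarrow> bool \<times> bool \<Rightarrow> 'a" where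
  "alpha M u v A = (if A = kone then \<one>\<^bsub>M\<^esub> else if A = ka then u else if A = kb then v
                    else u \<otimes>\<^bsub>M\<^esub> v)"

definition Fplus :: "('a, 'b) monoid_scheme \<Rightarrow> (bool \<times> bool \<Rightarrow> bool \<times> bool) \<Rightarrow> ('a \<Rightarrow> 'a)
     \<Rightarrow> 'a \<Rightarrow> 'a \<Rightarrow> (bool \<times> bool) \<times> 'a \<Rightarrow> (bool \<times> bool) \<times> 'a" where
  "Fplus M f' f'' u v = restrict (\<lambda>(A, x). (f' A, f'' x \<otimes>\<^bsub>M\<^esub> alpha M u v A)) (carrier (LM M))"

definition Fminus :: "('a, 'b) monoid_scheme \<Rightarrow> (bool \<times> bool \<Rightarrow> bool \<times> bool) \<Rightarrow> ('a \<Rightarrow> 'a)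
     \<Rightarrow> 'a \<Rightarrow> 'a \<Rightarrow> (bool \<times> bool) \<times> 'a \<Rightarrow> (bool \<times> bool) \<times> 'a" where
  "Fminus M f' f'' u v = restrict (\<lambda>(A, x). if A = kone then (kone, f'' x)
         else (f' A, f'' (inv\<^bsub>M\<^esub> x) \<otimes>\<^bsub>M\<^esub> alpha M u v A)) (carrier (LM M))"

end

theory Submission
  imports Defs
begin

text \<open>A half-automorphism \<open>f\<close> of \<open>L\<^sub>M\<close> commutes with squaring, and every square of \<open>L\<^sub>M\<close>
  lies in \<open>{1} \<times> M\<close>. Using an element \<open>z\<close> with \<open>z\<^sup>2 \<noteq> 1\<close> (it exists because the exponent
  exceeds 2) it follows that \<open>f\<close> restricts to an automorphism \<open>f''\<close> of \<open>{1} \<times> M \<cong> M\<close> and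
  acts on first coordinates by an automorphism \<open>f'\<close> of \<open>K\<close>. Writing \<open>f(A,1) = (f' A, c A)\<close>,
  the factorisation \<open>(A,x) = (A,1)(1,x)\<close> gives \<open>f(A,x) = (f' A, c A \<cdot> f''(x)\<^sup>\<plusminus>\<^sup>1)\<close> for
  \<open>A \<noteq> 1\<close>. Evaluating \<open>f\<close> on the products \<open>(A,x)(A,y)\<close>, \<open>(A,1)(B,z)\<close> and \<open>(A,z)(B,z)\<close>
  shows that the sign depends neither on \<open>x\<close> nor on \<open>A\<close>, and that \<open>c\<close> is a homomorphism
  from \<open>K\<close> into the 2-torsion \<open>T\<close> of \<open>M\<close>, i.e. \<open>c = \<alpha>(u,v)\<close>; so \<open>f\<close> is \<open>F\<^sup>+\<close> or \<open>F\<^sup>-\<close>.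
  Conversely each \<open>F\<^sup>\<plusminus>\<close> is a half-automorphism, and it determines its parameters and its
  sign. Hence \<open>|Half(L\<^sub>M)| = 2 |Aut K| |Aut M| |T|\<^sup>2\<close>, where \<open>T\<close> is trivial for odd \<open>|M|\<close>
  and has \<open>2\<^sup>s\<close> elements in case (b).\<close>

lemma klein_cases: "A = kone \<or> A = ka \<or> A = kb \<or> A = kc"
  by (cases A) (auto simp: kone_def ka_def kb_def kc_def)

lemma klein_distinct [simp]:
  "ka \<noteq> kone" "kb \<noteq> kone" "kc \<noteq> kone" "ka \<noteq> kb" "ka \<noteq> kc" "kb \<noteq> kc"
  "kone \<noteq> ka" "kone \<noteq> kb" "kone \<noteq> kc" "kb \<noteq> ka" "kc \<noteq> ka" "kc \<noteq> kb"
  by (auto simp: kone_def ka_def kb_def kc_def)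

lemma kmult_simps [simp]:
  "kmult A kone = A" "kmult kone A = A" "kmult A A = kone"
  "kmult ka kb = kc" "kmult kb ka = kc" "kmult ka kc = kb" "kmult kc ka = kb"
  "kmult kb kc = ka" "kmult kc kb = ka"
  by (auto simp: kmult_def kone_def ka_def kb_def kc_def)

lemma kmult_commute: "kmult A B = kmult B A"
  by (auto simp: kmult_def)

lemma kmult_eq_kone_iff: "kmult A B = kone \<longleftrightarrow> A = B"
  by (auto simp: kmult_def kone_def prod_eq_iff)

lemma klein_split:
  assumes "C \<noteq> kone"
  obtains A B where "A \<noteq> kone" "B \<noteq> kone" "C = kmult A B"
  using klein_cases[of C] assms
  by (metis kmult_simps(6,4,8) klein_distinct(3,4,5,6,1,2))

lemma Aut_klein_iff: "g \<in> Aut klein \<longleftrightarrow> inj g \<and> (\<forall>A B. g (kmult A B) = kmult (g A) (g B))"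
  by (auto simp: Aut_def iso_def hom_def klein_def bij_betw_def finite_UNIV_inj_surj)

lemma Aut_klein_kmult: "g \<in> Aut klein \<Longrightarrow> g (kmult A B) = kmult (g A) (g B)"
  unfolding Aut_klein_iff by blast

lemma Aut_klein_kone: "g \<in> Aut klein \<Longrightarrow> g kone = kone"
  using Aut_klein_kmult[of g kone kone] by simp

lemma Aut_klein_eq_kone_iff: "g \<in> Aut klein \<Longrightarrow> g A = kone \<longleftrightarrow> A = kone"
  by (metis Aut_klein_iff Aut_klein_kone injD)

definition two_torsion :: "('a, 'b) monoid_scheme \<Rightarrow> 'a set" where
  "two_torsion G = {x \<in> carrier G. x \<otimes>\<^bsub>G\<^esub> x = \<one>\<^bsub>G\<^esub>}"

context group
begin

lemma inv_eq_self_iff: "x \<in> carrier G \<Longrightarrow> inv x = x \<longleftrightarrow> x \<otimes> x = \<one>"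
  by (metis inv_closed inv_unique r_inv)

lemma two_torsion_inv: "x \<in> two_torsion G \<Longrightarrow> inv x = x"
  by (simp add: two_torsion_def inv_eq_self_iff)

lemma exists_square_neq_one:
  assumes "2 < group_exponent G"
  shows "\<exists>z\<in>carrier G. z \<otimes> z \<noteq> \<one>"
proof (rule ccontr)
  assume "\<not> ?thesis"
  then have "\<forall>x\<in>carrier G. x [^] (2::nat) = \<one>"
    by (simp add: numeral_2_eq_2)
  then have "group_exponent G \<le> 2"
    unfolding group_exponent_def by (intro Least_le) simp
  with assms show False by simp
qed

lemma Aut_group_hom: "f \<in> Aut G \<Longrightarrow> group_hom G G f"
  by (simp add: Aut_def iso_def group_hom_def group_hom_axioms_def is_group)

lemma Aut_inj_on: "f \<in> Aut G \<Longrightarrow> inj_on f (carrier G)"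
  by (simp add: Aut_def iso_def bij_betw_def)

lemma finite_Aut:
  assumes "finite (carrier G)"
  shows "finite (Aut G)"
proof (rule finite_subset)
  show "Aut G \<subseteq> carrier G \<rightarrow>\<^sub>E carrier G"
    by (auto simp: Aut_def iso_def hom_def PiE_def)
  show "finite (carrier G \<rightarrow>\<^sub>E carrier G)"
    using assms by (simp add: finite_PiE)
qed

end

lemma LM_carrier: "carrier (LM G) = UNIV \<times> carrier G"
  by (simp add: LM_def)

lemma LM_mult: "(A, x) \<otimes>\<^bsub>LM G\<^esub> (B, y) =
    (if B = kone then (kmult A B, x \<otimes>\<^bsub>G\<^esub> y) else (kmult A B, inv\<^bsub>G\<^esub> x \<otimes>\<^bsub>G\<^esub> y))"
  by (simp add: LM_def)

lemma fst_LM_mult: "fst (P \<otimes>\<^bsub>LM G\<^esub> Q) = kmult (fst P) (fst Q)"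
  by (cases P; cases Q) (simp add: LM_def)

lemma alpha_simps [simp]:
  "alpha G u v kone = \<one>\<^bsub>G\<^esub>" "alpha G u v ka = u" "alpha G u v kb = v"
  "alpha G u v kc = u \<otimes>\<^bsub>G\<^esub> v"
  by (auto simp: alpha_def)

lemma Fplus_apply:
  "x \<in> carrier G \<Longrightarrow> Fplus G f' f'' u v (A, x) = (f' A, f'' x \<otimes>\<^bsub>G\<^esub> alpha G u v A)"
  by (simp add: Fplus_def LM_carrier)

lemma Fminus_apply:
  "x \<in> carrier G \<Longrightarrow> Fminus G f' f'' u v (A, x) =
     (if A = kone then (kone, f'' x) else (f' A, f'' (inv\<^bsub>G\<^esub> x) \<otimes>\<^bsub>G\<^esub> alpha G u v A))"
  by (simp add: Fminus_def LM_carrier)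

lemma (in group) LM_square:
  "x \<in> carrier G \<Longrightarrow> (A, x) \<otimes>\<^bsub>LM G\<^esub> (A, x) = (kone, if A = kone then x \<otimes> x else \<one>)"
  by (simp add: LM_mult)

context comm_group
begin

lemma inv_mult_cancel_left:
  "\<lbrakk>a \<in> carrier G; b \<in> carrier G; c \<in> carrier G\<rbrakk> \<Longrightarrow> inv (c \<otimes> a) \<otimes> (c \<otimes> b) = inv a \<otimes> b"
  by (simp add: inv_mult m_assoc[symmetric]) (simp add: m_assoc m_lcomm[of "inv c"])

lemma mult_inv_right_pair:
  "\<lbrakk>a \<in> carrier G; c \<in> carrier G\<rbrakk> \<Longrightarrow> (c \<otimes> a) \<otimes> (c \<otimes> inv a) = c \<otimes> c"
  by (simp add: m_assoc m_lcomm[of a])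

lemma alpha_in_two_torsion:
  assumes "u \<in> two_torsion G" "v \<in> two_torsion G"
  shows "alpha G u v A \<in> two_torsion G"
  using klein_cases[of A] assms by (auto simp: two_torsion_def m_ac)

lemma alpha_kmult:
  assumes "u \<in> two_torsion G" "v \<in> two_torsion G"
  shows "alpha G u v (kmult A B) = alpha G u v A \<otimes> alpha G u v B"
proof -
  have uu: "u \<otimes> (u \<otimes> w) = w" "v \<otimes> (v \<otimes> w) = w" if "w \<in> carrier G" for w
    using assms that by (simp_all add: two_torsion_def m_assoc[symmetric])
  show ?thesis
    using klein_cases[of A] klein_cases[of B] assms uu(1)[of v] uu(2)[of u]
    by (auto simp: two_torsion_def m_ac)
qed

end

section \<open>The maps \<open>F\<^sup>+\<close> and \<open>F\<^sup>-\<close> are half-automorphisms\<close>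

lemma half_aut_finiteI:
  assumes "finite (carrier L)" "inj_on f (carrier L)" "f ` carrier L \<subseteq> carrier L"
    and "\<And>P Q. P \<in> carrier L \<Longrightarrow> Q \<in> carrier L \<Longrightarrow>
           f (P \<otimes>\<^bsub>L\<^esub> Q) \<in> {f P \<otimes>\<^bsub>L\<^esub> f Q, f Q \<otimes>\<^bsub>L\<^esub> f P}"
  shows "half_aut L f"
  using assms endo_inj_surj by (simp add: half_aut_def bij_betw_def)

context comm_group
begin

context
  fixes f' f'' u v
  assumes f': "f' \<in> Aut klein" and f'': "f'' \<in> Aut G"
    and u: "u \<in> two_torsion G" and v: "v \<in> two_torsion G"
begin

interpretation f'': group_hom G G f''
  using f'' by (rule Aut_group_hom)

lemma alpha_closed: "alpha G u v A \<in> carrier G"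
  and alpha_square: "alpha G u v A \<otimes> alpha G u v A = \<one>"
  using alpha_in_two_torsion[OF u v] by (simp_all add: two_torsion_def)

lemma Fplus_mult:
  assumes "P \<in> carrier (LM G)" "Q \<in> carrier (LM G)"
  shows "Fplus G f' f'' u v (P \<otimes>\<^bsub>LM G\<^esub> Q)
           = Fplus G f' f'' u v P \<otimes>\<^bsub>LM G\<^esub> Fplus G f' f'' u v Q"
proof -
  obtain A x B y where PQ: "P = (A, x)" "Q = (B, y)" and "x \<in> carrier G" "y \<in> carrier G"
    using assms by (cases P; cases Q) (auto simp: LM_carrier)
  then show ?thesis
    using alpha_closed two_torsion_inv[OF alpha_in_two_torsion[OF u v]]
    by (simp add: LM_mult Fplus_apply Aut_klein_kmult[OF f'] Aut_klein_eq_kone_iff[OF f']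
        Aut_klein_kone[OF f'] alpha_kmult[OF u v] inv_mult m_ac)
qed

text \<open>\<open>F\<^sup>-\<close> reverses every product except \<open>(A,x)(B,y)\<close> with \<open>A, B, AB \<noteq> 1\<close>.\<close>

lemma Fminus_mult:
  assumes "P \<in> carrier (LM G)" "Q \<in> carrier (LM G)"
  shows "Fminus G f' f'' u v (P \<otimes>\<^bsub>LM G\<^esub> Q)
           \<in> {Fminus G f' f'' u v P \<otimes>\<^bsub>LM G\<^esub> Fminus G f' f'' u v Q,
              Fminus G f' f'' u v Q \<otimes>\<^bsub>LM G\<^esub> Fminus G f' f'' u v P}"
proof -
  obtain A x B y where PQ: "P = (A, x)" "Q = (B, y)" and xy: "x \<in> carrier G" "y \<in> carrier G"
    using assms by (cases P; cases Q) (auto simp: LM_carrier)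
  note simps = LM_mult Fminus_apply Aut_klein_kmult[OF f'] Aut_klein_eq_kone_iff[OF f']
    alpha_kmult[OF u v] two_torsion_inv[OF alpha_in_two_torsion[OF u v]] inv_mult kmult_eq_kone_iff
    alpha_square
  show ?thesis
  proof (cases "A \<noteq> kone \<and> B \<noteq> kone \<and> A \<noteq> B")
    case True
    then show ?thesis
      using PQ xy alpha_closed by (simp add: simps m_ac)
  next
    case False
    then show ?thesis
      using PQ xy alpha_closed by (auto simp: simps m_ac kmult_commute)
  qed
qed

lemma Fplus_inject:
  assumes "x \<in> carrier G" "y \<in> carrier G"
    and eq: "Fplus G f' f'' u v (A, x) = Fplus G f' f'' u v (B, y)"
  shows "A = B \<and> x = y"
proof -
  from eq assms have "f' A = f' B" by (simp add: Fplus_apply)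
  then have AB: "A = B" using f' by (metis Aut_klein_iff injD)
  with eq assms have "f'' x \<otimes> alpha G u v A = f'' y \<otimes> alpha G u v A"
    by (simp add: Fplus_apply)
  then have "f'' x = f'' y" using assms alpha_closed by (metis f''.hom_closed r_cancel)
  with AB assms show ?thesis using Aut_inj_on[OF f''] by (simp add: inj_on_def)
qed

lemma Fminus_inject:
  assumes "x \<in> carrier G" "y \<in> carrier G"
    and eq: "Fminus G f' f'' u v (A, x) = Fminus G f' f'' u v (B, y)"
  shows "A = B \<and> x = y"
proof -
  from eq assms have "f' A = f' B"
    using Aut_klein_kone[OF f'] by (simp add: Fminus_apply split: if_splits)
  then have AB: "A = B" using f' by (metis Aut_klein_iff injD)
  have "f'' x = f'' y"
  proof (cases "A = kone")
    case True
    with eq assms AB show ?thesis by (simp add: Fminus_apply)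
  next
    case False
    with eq assms AB have "inv (f'' x) \<otimes> alpha G u v A = inv (f'' y) \<otimes> alpha G u v A"
      by (simp add: Fminus_apply)
    then show ?thesis using assms alpha_closed by (metis f''.hom_closed inv_closed inv_inv r_cancel)
  qed
  with AB assms show ?thesis using Aut_inj_on[OF f''] by (simp add: inj_on_def)
qed

lemma Fplus_Fminus_apply_kone:
  assumes "F \<in> {Fplus G f' f'' u v, Fminus G f' f'' u v}" "x \<in> carrier G"
  shows "F (kone, x) = (kone, f'' x)"
  using assms Aut_klein_kone[OF f'] by (auto simp: Fplus_apply Fminus_apply)

lemma Fplus_Fminus_apply_one:
  assumes "F \<in> {Fplus G f' f'' u v, Fminus G f' f'' u v}" "A \<noteq> kone"
  shows "F (A, \<one>) = (f' A, alpha G u v A)"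
  using assms by (auto simp: Fplus_apply Fminus_apply alpha_closed)

lemma Fplus_in_Half:
  assumes "finite (carrier G)"
  shows "Fplus G f' f'' u v \<in> Half (LM G)"
proof -
  have "half_aut (LM G) (Fplus G f' f'' u v)"
  proof (rule half_aut_finiteI)
    show "Fplus G f' f'' u v ` carrier (LM G) \<subseteq> carrier (LM G)"
      using alpha_closed by (auto simp: LM_carrier Fplus_apply)
  qed (use assms Fplus_inject Fplus_mult in \<open>auto simp: LM_carrier inj_on_def\<close>)
  then show ?thesis by (simp add: Half_def Fplus_def)
qed

lemma Fminus_in_Half:
  assumes "finite (carrier G)"
  shows "Fminus G f' f'' u v \<in> Half (LM G)"
proof -
  have "half_aut (LM G) (Fminus G f' f'' u v)"
  proof (rule half_aut_finiteI[OF _ _ _ Fminus_mult])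
    show "Fminus G f' f'' u v ` carrier (LM G) \<subseteq> carrier (LM G)"
      using alpha_closed by (auto simp: LM_carrier Fminus_apply split: if_splits)
  qed (use assms Fminus_inject in \<open>auto simp: LM_carrier inj_on_def\<close>)
  then show ?thesis by (simp add: Half_def Fminus_def)
qed

end

end

section \<open>Every half-automorphism is an \<open>F\<^sup>+\<close> or an \<open>F\<^sup>-\<close>\<close>

locale LM_half_aut = comm_group M for M :: "('a, 'b) monoid_scheme" (structure) +
  fixes f :: "(bool \<times> bool) \<times> 'a \<Rightarrow> (bool \<times> bool) \<times> 'a" and z :: 'a
  assumes f_Half: "f \<in> Half (LM M)"
    and z_closed: "z \<in> carrier M" and z_square: "z \<otimes> z \<noteq> \<one>"
begin

lemma f_bij: "bij_betw f (carrier (LM M)) (carrier (LM M))"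
  using f_Half by (simp add: Half_def half_aut_def)

lemma f_mult:
  assumes "x \<in> carrier M" "y \<in> carrier M"
  shows "f ((A, x) \<otimes>\<^bsub>LM M\<^esub> (B, y)) = f (A, x) \<otimes>\<^bsub>LM M\<^esub> f (B, y)
       \<or> f ((A, x) \<otimes>\<^bsub>LM M\<^esub> (B, y)) = f (B, y) \<otimes>\<^bsub>LM M\<^esub> f (A, x)"
proof -
  have "(A, x) \<in> carrier (LM M)" "(B, y) \<in> carrier (LM M)"
    using assms by (simp_all add: LM_carrier)
  with f_Half show ?thesis unfolding Half_def half_aut_def by blast
qed

lemma snd_f_closed: "x \<in> carrier M \<Longrightarrow> snd (f (A, x)) \<in> carrier M"
  using bij_betw_apply[OF f_bij, of "(A, x)"] by (auto simp: LM_carrier)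

lemma f_inject:
  assumes "x \<in> carrier M" "y \<in> carrier M" "f (A, x) = f (B, y)"
  shows "A = B \<and> x = y"
  using assms bij_betw_imp_inj_on[OF f_bij] by (auto simp: LM_carrier dest: inj_onD)

lemma f_surj:
  assumes "y \<in> carrier M"
  obtains A x where "x \<in> carrier M" "f (A, x) = (B, y)"
proof -
  have "(B, y) \<in> f ` carrier (LM M)"
    using assms bij_betw_imp_surj_on[OF f_bij] by (simp add: LM_carrier)
  then show ?thesis using that by (auto simp: LM_carrier)
qed

lemma fst_f_mult:
  assumes "x \<in> carrier M" "y \<in> carrier M"
  shows "fst (f ((A, x) \<otimes>\<^bsub>LM M\<^esub> (B, y))) = kmult (fst (f (A, x))) (fst (f (B, y)))"
  using f_mult[OF assms] by (metis fst_LM_mult kmult_commute)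

lemma f_one: "f (kone, \<one>) = (kone, \<one>)"
proof -
  obtain A w where Aw: "f (kone, \<one>) = (A, w)" by fastforce
  have w: "w \<in> carrier M" using snd_f_closed[of \<one> kone] Aw by simp
  have "f (kone, \<one>) = f (kone, \<one>) \<otimes>\<^bsub>LM M\<^esub> f (kone, \<one>)"
    using f_mult[of \<one> \<one> kone kone] by (simp add: LM_mult)
  with Aw have "(A, w) = (A, w) \<otimes>\<^bsub>LM M\<^esub> (A, w)" by simp
  with Aw w show ?thesis by (simp add: LM_mult split: if_splits)
qed

text \<open>Elements of order \<open>> 2\<close> are handled by squaring; any other \<open>x\<close> is the product
  \<open>(x z)(z\<inverse>)\<close> of two such.\<close>

lemma fst_f_kone_if_square_neq_one:
  assumes x: "x \<in> carrier M" "x \<otimes> x \<noteq> \<one>"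
  shows "fst (f (kone, x)) = kone"
proof (rule ccontr)
  assume "fst (f (kone, x)) \<noteq> kone"
  then have "f (kone, x) \<otimes>\<^bsub>LM M\<^esub> f (kone, x) = (kone, \<one>)"
    using LM_square[OF snd_f_closed[OF x(1)], of "fst (f (kone, x))" kone] by simp
  moreover have "f (kone, x) \<otimes>\<^bsub>LM M\<^esub> f (kone, x) = f (kone, x \<otimes> x)"
    using f_mult[OF x(1) x(1), of kone kone] LM_square[OF x(1), of kone] by simp
  ultimately have "f (kone, x \<otimes> x) = f (kone, \<one>)" using f_one by simp
  with x show False using f_inject by blast
qed

lemma fst_f_kone:
  assumes x: "x \<in> carrier M"
  shows "fst (f (kone, x)) = kone"
proof (cases "x \<otimes> x = \<one>")
  case True
  have "(x \<otimes> z) \<otimes> (x \<otimes> z) \<noteq> \<one>"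
    using True x z_closed z_square by (metis m_assoc m_closed m_comm r_one)
  then have "fst (f (kone, x \<otimes> z)) = kone"
    using x z_closed by (simp add: fst_f_kone_if_square_neq_one)
  moreover have "inv z \<otimes> inv z \<noteq> \<one>"
    using z_closed z_square by (metis inv_closed inv_mult inv_one inv_inv)
  then have "fst (f (kone, inv z)) = kone"
    using z_closed by (simp add: fst_f_kone_if_square_neq_one)
  moreover have "(kone, x \<otimes> z) \<otimes>\<^bsub>LM M\<^esub> (kone, inv z) = (kone, x)"
    using x z_closed by (simp add: LM_mult m_assoc)
  ultimately show ?thesis
    using fst_f_mult[of "x \<otimes> z" "inv z" kone kone] x z_closed by simp
qed (use x fst_f_kone_if_square_neq_one in blast)

definition fK :: "bool \<times> bool \<Rightarrow> bool \<times> bool" where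
  "fK A = fst (f (A, \<one>))"

lemma fst_f: "x \<in> carrier M \<Longrightarrow> fst (f (A, x)) = fK A"
  using fst_f_mult[of \<one> x A kone] fst_f_kone[of x] by (simp add: LM_mult fK_def)

lemma fK_kmult: "fK (kmult A B) = kmult (fK A) (fK B)"
  using fst_f_mult[of \<one> \<one> A B] by (simp add: LM_mult fK_def split: if_split_asm)

lemma surj_fK: "surj fK"
proof -
  have "C \<in> range fK" for C
  proof -
    obtain A x where "x \<in> carrier M" "f (A, x) = (C, \<one>)"
      using f_surj[of \<one> C] by blast
    then show ?thesis using fst_f by (metis fst_conv rangeI)
  qed
  then show ?thesis by blast
qed

lemma fK_Aut: "fK \<in> Aut klein"
  using surj_fK fK_kmult by (simp add: Aut_klein_iff finite_UNIV_surj_inj)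

lemma fK_eq_kone_iff: "fK A = kone \<longleftrightarrow> A = kone"
  using Aut_klein_eq_kone_iff[OF fK_Aut] .

definition fM :: "'a \<Rightarrow> 'a" where
  "fM = restrict (\<lambda>x. snd (f (kone, x))) (carrier M)"

lemma f_kone: "x \<in> carrier M \<Longrightarrow> f (kone, x) = (kone, fM x)"
  using fst_f_kone[of x] by (simp add: fM_def prod_eq_iff)

lemma fM_closed: "x \<in> carrier M \<Longrightarrow> fM x \<in> carrier M"
  using snd_f_closed by (simp add: fM_def)

lemma fM_mult:
  assumes "x \<in> carrier M" "y \<in> carrier M"
  shows "fM (x \<otimes> y) = fM x \<otimes> fM y"
proof -
  have "(kone, fM (x \<otimes> y)) = (kone, fM x \<otimes> fM y) \<or> (kone, fM (x \<otimes> y)) = (kone, fM y \<otimes> fM x)"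
    using f_mult[OF assms, of kone kone] assms by (simp add: LM_mult f_kone)
  then show ?thesis using assms fM_closed m_comm by auto
qed

lemma fM_Aut: "fM \<in> Aut M"
proof -
  have inj: "inj_on fM (carrier M)"
    by (rule inj_onI) (metis f_kone f_inject)
  have "carrier M \<subseteq> fM ` carrier M"
  proof
    fix y assume y: "y \<in> carrier M"
    obtain A x where Ax: "x \<in> carrier M" "f (A, x) = (kone, y)"
      using f_surj[OF y] by blast
    then have "A = kone" using fst_f[of x A] fK_eq_kone_iff by (metis fst_conv)
    with Ax show "y \<in> fM ` carrier M" using f_kone by auto
  qed
  with inj fM_closed fM_mult show ?thesis
    by (auto simp: Aut_def iso_def hom_def bij_betw_def fM_def)
qed

interpretation fM: group_hom M M fM
  using fM_Aut by (rule Aut_group_hom)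

lemma fM_z: "inv (fM z) \<noteq> fM z"
proof
  assume "inv (fM z) = fM z"
  then have "fM (z \<otimes> z) = fM \<one>"
    using z_closed by (simp add: inv_eq_self_iff)
  then show False
    using z_closed z_square Aut_inj_on[OF fM_Aut] by (metis inj_onD m_closed one_closed)
qed

definition shift :: "bool \<times> bool \<Rightarrow> 'a" where
  "shift A = snd (f (A, \<one>))"

lemma shift_closed: "shift A \<in> carrier M"
  by (simp add: shift_def snd_f_closed)

lemma f_pair: "x \<in> carrier M \<Longrightarrow> f (A, x) = (fK A, snd (f (A, x)))"
  using fst_f by (simp add: prod_eq_iff)

lemma f_one_right: "f (A, \<one>) = (fK A, shift A)"
  using f_pair[of \<one> A] by (simp add: shift_def)

lemma snd_f_cases:
  assumes "A \<noteq> kone" "x \<in> carrier M"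
  shows "snd (f (A, x)) = shift A \<otimes> fM x \<or> snd (f (A, x)) = shift A \<otimes> inv (fM x)"
proof -
  have "f (A, x) = (fK A, shift A) \<otimes>\<^bsub>LM M\<^esub> (kone, fM x)
      \<or> f (A, x) = (kone, fM x) \<otimes>\<^bsub>LM M\<^esub> (fK A, shift A)"
    using f_mult[of \<one> x A kone] assms by (simp add: LM_mult f_one_right f_kone)
  then show ?thesis
    using assms fK_eq_kone_iff fM_closed shift_closed by (auto simp: LM_mult m_comm)
qed

lemma snd_f_mult:
  assumes "A \<noteq> kone" "B \<noteq> kone" "x \<in> carrier M" "y \<in> carrier M"
  shows "snd (f ((A, x) \<otimes>\<^bsub>LM M\<^esub> (B, y))) = inv (snd (f (A, x))) \<otimes> snd (f (B, y))
       \<or> snd (f ((A, x) \<otimes>\<^bsub>LM M\<^esub> (B, y))) = inv (snd (f (B, y))) \<otimes> snd (f (A, x))"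
proof -
  obtain a b where "f (A, x) = (fK A, a)" "f (B, y) = (fK B, b)"
    using f_pair assms(3,4) by blast
  with f_mult[OF assms(3,4), of A B] assms fK_eq_kone_iff show ?thesis
    by (auto simp: LM_mult)
qed

definition plus_shaped :: "bool \<times> bool \<Rightarrow> bool" where
  "plus_shaped A \<longleftrightarrow> (\<forall>x\<in>carrier M. snd (f (A, x)) = shift A \<otimes> fM x)"

definition minus_shaped :: "bool \<times> bool \<Rightarrow> bool" where
  "minus_shaped A \<longleftrightarrow> (\<forall>x\<in>carrier M. snd (f (A, x)) = shift A \<otimes> inv (fM x))"

lemma plus_or_minus_shaped:
  assumes A: "A \<noteq> kone"
  shows "plus_shaped A \<or> minus_shaped A"
proof (rule ccontr)
  assume "\<not> ?thesis"
  then obtain x y where x: "x \<in> carrier M" "snd (f (A, x)) \<noteq> shift A \<otimes> fM x"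
    and y: "y \<in> carrier M" "snd (f (A, y)) \<noteq> shift A \<otimes> inv (fM y)"
    by (auto simp: plus_shaped_def minus_shaped_def)
  then have hx: "snd (f (A, x)) = shift A \<otimes> inv (fM x)"
    and hy: "snd (f (A, y)) = shift A \<otimes> fM y"
    using snd_f_cases[OF A] by blast+
  have "(A, x) \<otimes>\<^bsub>LM M\<^esub> (A, y) = (kone, inv x \<otimes> y)"
    using A by (simp add: LM_mult)
  then have "inv (fM x) \<otimes> fM y = inv (snd (f (A, x))) \<otimes> snd (f (A, y))
           \<or> inv (fM x) \<otimes> fM y = inv (snd (f (A, y))) \<otimes> snd (f (A, x))"
    using snd_f_mult[OF A A x(1) y(1)] f_kone[of "inv x \<otimes> y"] x(1) y(1) by simp
  also have "inv (snd (f (A, x))) \<otimes> snd (f (A, y)) = fM x \<otimes> fM y"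
    using hx hy x y shift_closed fM_closed by (simp add: inv_mult_cancel_left)
  also have "inv (snd (f (A, y))) \<otimes> snd (f (A, x)) = inv (fM x) \<otimes> inv (fM y)"
    using hx hy x y shift_closed fM_closed by (simp add: inv_mult_cancel_left) (simp add: m_comm)
  finally show False
  proof
    assume "inv (fM x) \<otimes> fM y = fM x \<otimes> fM y"
    then have "inv (fM x) = fM x" using x y fM_closed by (metis inv_closed r_cancel)
    with x hx show False by simp
  next
    assume "inv (fM x) \<otimes> fM y = inv (fM x) \<otimes> inv (fM y)"
    then have "fM y = inv (fM y)" using x y fM_closed by (metis inv_closed l_cancel)
    with y hy show False by simp
  qed
qed

lemma snd_f_z_inv_z:
  assumes "C \<noteq> kone"
  shows "snd (f (C, z)) \<otimes> snd (f (C, inv z)) = shift C \<otimes> shift C"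
    and "snd (f (C, z)) \<noteq> snd (f (C, inv z))"
proof -
  have "snd (f (C, z)) = shift C \<otimes> fM z \<and> snd (f (C, inv z)) = shift C \<otimes> inv (fM z)
      \<or> snd (f (C, z)) = shift C \<otimes> inv (fM z) \<and> snd (f (C, inv z)) = shift C \<otimes> fM z"
    using plus_or_minus_shaped[OF assms] z_closed
    by (auto simp: plus_shaped_def minus_shaped_def)
  moreover have "shift C \<otimes> fM z \<noteq> shift C \<otimes> inv (fM z)"
    using fM_z z_closed shift_closed fM_closed by simp
  moreover have "(shift C \<otimes> fM z) \<otimes> (shift C \<otimes> inv (fM z)) = shift C \<otimes> shift C"
    and "(shift C \<otimes> inv (fM z)) \<otimes> (shift C \<otimes> fM z) = shift C \<otimes> shift C"
    using z_closed shift_closed fM_closed mult_inv_right_pair m_comm by auto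
  ultimately show "snd (f (C, z)) \<otimes> snd (f (C, inv z)) = shift C \<otimes> shift C"
    and "snd (f (C, z)) \<noteq> snd (f (C, inv z))"
    by auto
qed

text \<open>Both \<open>f(C,z)\<close> and \<open>f(C,z\<inverse>)\<close> are \<open>R\<close> or \<open>R\<inverse>\<close> for one \<open>R\<close>, being computed from
  \<open>(A,1)(B,z)\<close> and \<open>(B,z)(A,1)\<close> with \<open>AB = C\<close>; as they differ, their product \<open>shift C\<^sup>2\<close> is \<open>1\<close>.\<close>

lemma shift_square:
  assumes "C \<noteq> kone"
  shows "shift C \<otimes> shift C = \<one>"
proof -
  obtain A B where A: "A \<noteq> kone" and B: "B \<noteq> kone" and C: "C = kmult A B"
    using klein_split[OF assms] .
  define R where "R = inv (shift A) \<otimes> snd (f (B, z))"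
  have R: "R \<in> carrier M"
    using shift_closed snd_f_closed z_closed by (simp add: R_def)
  have inv_R: "inv (snd (f (B, z))) \<otimes> shift A = inv R"
    using shift_closed snd_f_closed z_closed by (simp add: R_def inv_mult m_comm)
  have "(A, \<one>) \<otimes>\<^bsub>LM M\<^esub> (B, z) = (C, z)" "(B, z) \<otimes>\<^bsub>LM M\<^esub> (A, \<one>) = (C, inv z)"
    using A B C z_closed by (simp_all add: LM_mult kmult_commute)
  then have "snd (f (C, z)) \<in> {R, inv R}" "snd (f (C, inv z)) \<in> {R, inv R}"
    using snd_f_mult[OF A B one_closed z_closed] snd_f_mult[OF B A z_closed one_closed] inv_R
    by (auto simp: R_def shift_def)
  with snd_f_z_inv_z[OF assms] R show ?thesis
    by auto
qed

lemma shift_kmult: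
  assumes A: "A \<noteq> kone" and B: "B \<noteq> kone"
  shows "shift (kmult A B) = shift A \<otimes> shift B"
proof -
  have "(A, \<one>) \<otimes>\<^bsub>LM M\<^esub> (B, \<one>) = (kmult A B, \<one>)"
    using B by (simp add: LM_mult)
  then have "shift (kmult A B) = inv (shift A) \<otimes> shift B
           \<or> shift (kmult A B) = inv (shift B) \<otimes> shift A"
    using snd_f_mult[OF A B one_closed one_closed] by (simp add: shift_def)
  moreover have "inv (shift A) = shift A" "inv (shift B) = shift B"
    using shift_square A B shift_closed by (simp_all add: inv_eq_self_iff)
  ultimately show ?thesis
    using shift_closed m_comm by auto
qed

lemma plus_shaped_transfer:
  assumes A: "A \<noteq> kone" and B: "B \<noteq> kone" and plus_A: "plus_shaped A"
  shows "plus_shaped B"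
proof (rule ccontr)
  assume "\<not> plus_shaped B"
  then have "minus_shaped B" using plus_or_minus_shaped[OF B] by blast
  then have hB: "snd (f (B, z)) = shift B \<otimes> inv (fM z)"
    using z_closed by (simp add: minus_shaped_def)
  have hA: "snd (f (A, z)) = shift A \<otimes> fM z"
    using plus_A z_closed by (simp add: plus_shaped_def)
  have inv_shift: "inv (shift A) = shift A" "inv (shift B) = shift B"
    using shift_square A B shift_closed by (simp_all add: inv_eq_self_iff)
  have "(A, z) \<otimes>\<^bsub>LM M\<^esub> (B, z) = (kmult A B, \<one>)"
    using B z_closed by (simp add: LM_mult)
  then have "shift A \<otimes> shift B = inv (snd (f (A, z))) \<otimes> snd (f (B, z))
           \<or> shift A \<otimes> shift B = inv (snd (f (B, z))) \<otimes> snd (f (A, z))"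
    using snd_f_mult[OF A B z_closed z_closed] shift_kmult[OF A B] by (simp add: shift_def)
  also have "inv (snd (f (A, z))) \<otimes> snd (f (B, z)) = (shift A \<otimes> shift B) \<otimes> (inv (fM z) \<otimes> inv (fM z))"
    using hA hB inv_shift shift_closed fM_closed z_closed by (simp add: inv_mult m_ac)
  also have "inv (snd (f (B, z))) \<otimes> snd (f (A, z)) = (shift A \<otimes> shift B) \<otimes> (fM z \<otimes> fM z)"
    using hA hB inv_shift shift_closed fM_closed z_closed by (simp add: inv_mult m_ac)
  finally have "inv (fM z) \<otimes> inv (fM z) = \<one> \<or> fM z \<otimes> fM z = \<one>"
    using shift_closed fM_closed z_closed by simp
  then show False
    using fM_z fM_closed z_closed by (metis inv_closed inv_eq_self_iff inv_inv)
qed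

lemma shift_eq_alpha:
  assumes "A \<noteq> kone"
  shows "shift A = alpha M (shift ka) (shift kb) A"
  using klein_cases[of A] assms shift_kmult[of ka kb] by auto

lemma shift_in_two_torsion: "A \<noteq> kone \<Longrightarrow> shift A \<in> two_torsion M"
  using shift_closed shift_square by (simp add: two_torsion_def)

lemma f_eq_Fplus_or_Fminus:
  "f = Fplus M fK fM (shift ka) (shift kb) \<or> f = Fminus M fK fM (shift ka) (shift kb)"
proof -
  let ?u = "shift ka" and ?v = "shift kb"
  have ext: "f \<in> extensional (carrier (LM M))"
    using f_Half by (simp add: Half_def)
  have f_not_kone: "f (A, x) = (fK A, snd (f (A, x)))" "shift A = alpha M ?u ?v A"
    "alpha M ?u ?v A \<in> carrier M"
    if "A \<noteq> kone" "x \<in> carrier M" for A x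
    using that f_pair shift_eq_alpha shift_closed by metis+
  have fK_kone: "fK kone = kone"
    using Aut_klein_kone[OF fK_Aut] .
  show ?thesis
  proof (cases "plus_shaped ka")
    case True
    then have "plus_shaped A" if "A \<noteq> kone" for A
      using plus_shaped_transfer[of ka A] that by simp
    then have "f (A, x) = Fplus M fK fM ?u ?v (A, x)" if "x \<in> carrier M" for A x
      using that f_not_kone[of A x] f_kone[of x] fK_kone shift_closed fM_closed
      by (cases "A = kone") (auto simp: Fplus_apply plus_shaped_def m_comm)
    then have "f = Fplus M fK fM ?u ?v"
      using ext by (intro extensionalityI[of _ "carrier (LM M)"]) (auto simp: Fplus_def LM_carrier)
    then show ?thesis ..
  next
    case False
    then have "minus_shaped A" if "A \<noteq> kone" for A
      using plus_shaped_transfer[of A ka] plus_or_minus_shaped[OF that] that by auto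
    then have "f (A, x) = Fminus M fK fM ?u ?v (A, x)" if "x \<in> carrier M" for A x
      using that f_not_kone[of A x] f_kone[of x] shift_closed fM_closed
      by (cases "A = kone") (auto simp: Fminus_apply minus_shaped_def m_comm)
    then have "f = Fminus M fK fM ?u ?v"
      using ext by (intro extensionalityI[of _ "carrier (LM M)"]) (auto simp: Fminus_def LM_carrier)
    then show ?thesis ..
  qed
qed

end

lemma (in comm_group) Half_LM_cases:
  assumes "f \<in> Half (LM G)" "z \<in> carrier G" "z \<otimes> z \<noteq> \<one>"
  obtains f' f'' u v where "f' \<in> Aut klein" "f'' \<in> Aut G" "u \<in> two_torsion G" "v \<in> two_torsion G"
    "f = Fplus G f' f'' u v \<or> f = Fminus G f' f'' u v"
proof -
  interpret LM_half_aut G f z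
    using assms by unfold_locales
  show ?thesis
    by (rule that[OF fK_Aut fM_Aut _ _ f_eq_Fplus_or_Fminus]) (simp_all add: shift_in_two_torsion)
qed

section \<open>Counting\<close>

lemma setcompr_eq_image4:
  "{F a b c d | a b c d. a \<in> A \<and> b \<in> B \<and> c \<in> C \<and> d \<in> D}
     = (\<lambda>(a, b, c, d). F a b c d) ` (A \<times> B \<times> C \<times> D)"
  by force

context comm_group
begin

lemma Fplus_Fminus_params_unique:
  assumes f1: "f1 \<in> Aut klein" "g1 \<in> Aut G" "u1 \<in> two_torsion G" "v1 \<in> two_torsion G"
    and f2: "f2 \<in> Aut klein" "g2 \<in> Aut G" "u2 \<in> two_torsion G" "v2 \<in> two_torsion G"
    and F1: "F \<in> {Fplus G f1 g1 u1 v1, Fminus G f1 g1 u1 v1}"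
    and F2: "F \<in> {Fplus G f2 g2 u2 v2, Fminus G f2 g2 u2 v2}"
  shows "f1 = f2 \<and> g1 = g2 \<and> u1 = u2 \<and> v1 = v2"
proof -
  have one: "(f1 A, alpha G u1 v1 A) = (f2 A, alpha G u2 v2 A)" if "A \<noteq> kone" for A
    using Fplus_Fminus_apply_one[OF f1 F1 that] Fplus_Fminus_apply_one[OF f2 F2 that] by simp
  have "f1 A = f2 A" for A
    using one[of A] Aut_klein_kone[OF f1(1)] Aut_klein_kone[OF f2(1)] by (cases "A = kone") auto
  moreover have "u1 = u2" "v1 = v2"
    using one[of ka] one[of kb] by simp_all
  moreover have "g1 = g2"
  proof (rule extensionalityI)
    show "g1 \<in> extensional (carrier G)" "g2 \<in> extensional (carrier G)"
      using f1 f2 by (simp_all add: Aut_def)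
    show "g1 x = g2 x" if "x \<in> carrier G" for x
      using Fplus_Fminus_apply_kone[OF f1 F1 that] Fplus_Fminus_apply_kone[OF f2 F2 that] by simp
  qed
  ultimately show ?thesis by blast
qed

lemma Fplus_neq_Fminus:
  assumes f1: "f1 \<in> Aut klein" "g1 \<in> Aut G" "u1 \<in> two_torsion G" "v1 \<in> two_torsion G"
    and f2: "f2 \<in> Aut klein" "g2 \<in> Aut G" "u2 \<in> two_torsion G" "v2 \<in> two_torsion G"
    and z: "z \<in> carrier G" "z \<otimes> z \<noteq> \<one>"
  shows "Fplus G f1 g1 u1 v1 \<noteq> Fminus G f2 g2 u2 v2"
proof
  assume eq: "Fplus G f1 g1 u1 v1 = Fminus G f2 g2 u2 v2"
  then have "g2 = g1" "u2 = u1"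
    using Fplus_Fminus_params_unique[OF f1 f2, of "Fplus G f1 g1 u1 v1"] by simp_all
  interpret g1: group_hom G G g1
    using f1(2) by (rule Aut_group_hom)
  have "g1 z \<otimes> u1 = inv (g1 z) \<otimes> u1"
    using fun_cong[OF eq, of "(ka, z)"] \<open>g2 = g1\<close> \<open>u2 = u1\<close> z
    by (simp add: Fplus_apply Fminus_apply)
  then have "g1 (z \<otimes> z) = g1 \<one>"
    using f1(3) z by (simp add: two_torsion_def inv_eq_self_iff[symmetric])
  then show False
    using z Aut_inj_on[OF f1(2)] by (metis inj_onD m_closed one_closed)
qed

lemma Half_LM_eq:
  assumes "finite (carrier G)" "z \<in> carrier G" "z \<otimes> z \<noteq> \<one>"
  shows "Half (LM G) =
           {Fplus G f' f'' u v | f' f'' u v. f' \<in> Aut klein \<and> f'' \<in> Aut G \<and>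
              u \<in> two_torsion G \<and> v \<in> two_torsion G}
         \<union> {Fminus G f' f'' u v | f' f'' u v. f' \<in> Aut klein \<and> f'' \<in> Aut G \<and>
              u \<in> two_torsion G \<and> v \<in> two_torsion G}" (is "_ = ?plus \<union> ?minus")
proof
  show "Half (LM G) \<subseteq> ?plus \<union> ?minus"
  proof
    fix f assume "f \<in> Half (LM G)"
    then obtain f' f'' u v where "f' \<in> Aut klein" "f'' \<in> Aut G" "u \<in> two_torsion G"
      "v \<in> two_torsion G" "f = Fplus G f' f'' u v \<or> f = Fminus G f' f'' u v"
      using Half_LM_cases[OF _ assms(2,3)] by metis
    then show "f \<in> ?plus \<union> ?minus" by blast
  qed
  show "?plus \<union> ?minus \<subseteq> Half (LM G)"
    using Fplus_in_Half[OF _ _ _ _ assms(1)] Fminus_in_Half[OF _ _ _ _ assms(1)] by blast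
qed

lemma card_Half_LM:
  assumes fin: "finite (carrier G)" and z: "z \<in> carrier G" "z \<otimes> z \<noteq> \<one>"
  shows "card (Half (LM G)) = 2 * card (Aut klein) * card (Aut G) * card (two_torsion G) ^ 2"
proof -
  define P where "P = Aut klein \<times> Aut G \<times> two_torsion G \<times> two_torsion G"
  define Fp where "Fp = (\<lambda>(f', f'', u, v). Fplus G f' f'' u v)"
  define Fm where "Fm = (\<lambda>(f', f'', u, v). Fminus G f' f'' u v)"
  have Half: "Half (LM G) = Fp ` P \<union> Fm ` P"
    unfolding Half_LM_eq[OF assms] Fp_def Fm_def P_def by (simp only: setcompr_eq_image4)
  have unique: "p = q" if "p \<in> P" "q \<in> P" "F \<in> {Fp p, Fm p}" "F \<in> {Fp q, Fm q}" for p q F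
  proof -
    obtain f1 g1 u1 v1 f2 g2 u2 v2 where "p = (f1, g1, u1, v1)" "q = (f2, g2, u2, v2)"
      by (cases p, cases q) auto
    with that Fplus_Fminus_params_unique[of f1 g1 u1 v1 f2 g2 u2 v2 F] show ?thesis
      by (simp add: P_def Fp_def Fm_def)
  qed
  have "inj_on Fp P"
  proof (rule inj_onI)
    fix p q assume "p \<in> P" "q \<in> P" "Fp p = Fp q"
    then show "p = q" using unique[of p q "Fp p"] by simp
  qed
  moreover have "inj_on Fm P"
  proof (rule inj_onI)
    fix p q assume "p \<in> P" "q \<in> P" "Fm p = Fm q"
    then show "p = q" using unique[of p q "Fm p"] by simp
  qed
  moreover have "Fp ` P \<inter> Fm ` P = {}"
    using Fplus_neq_Fminus[OF _ _ _ _ _ _ _ _ z] by (auto simp: Fp_def Fm_def P_def)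
  moreover have "finite P"
    using fin finite_Aut by (simp add: P_def two_torsion_def)
  ultimately have "card (Half (LM G)) = 2 * card P"
    unfolding Half by (simp add: card_Un_disjoint card_image)
  then show ?thesis
    by (simp add: P_def card_cartesian_product power2_eq_square)
qed

end

lemma (in group) two_torsion_eq_if_odd:
  assumes "odd (card (carrier G))"
  shows "two_torsion G = {\<one>}"
proof -
  have "x = \<one>" if x: "x \<in> carrier G" "x \<otimes> x = \<one>" for x
  proof (rule ccontr)
    assume "x \<noteq> \<one>"
    then have "ord x \<noteq> 1" using ord_eq_1 x(1) by blast
    moreover have "x [^] (2::nat) = \<one>"
      using x by (simp add: numeral_2_eq_2)
    then have "ord x dvd 2"
      using pow_eq_id[OF x(1)] by blast
    ultimately have "ord x = 2"
      using dvd_imp_le[of "ord x" 2] by (cases "ord x") (auto simp: numeral_2_eq_2 le_Suc_eq)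
    then have "2 dvd card (carrier G)"
      using ord_dvd_group_order[OF x(1)] by (simp add: order_def)
    with assms show False by simp
  qed
  then show ?thesis by (auto simp: two_torsion_def)
qed

lemma two_torsion_iso_image:
  assumes "group G" "group H" "h \<in> iso G H"
  shows "h ` two_torsion G = two_torsion H"
proof -
  interpret h: group_hom G H h
    using assms by (simp add: group_hom_def group_hom_axioms_def iso_def)
  have inj: "inj_on h (carrier G)" and surj: "h ` carrier G = carrier H"
    using assms(3) by (auto simp: iso_def bij_betw_def)
  show ?thesis
  proof
    show "h ` two_torsion G \<subseteq> two_torsion H"
      by (auto simp: two_torsion_def simp flip: h.hom_mult)
    show "two_torsion H \<subseteq> h ` two_torsion G"
    proof
      fix x assume x: "x \<in> two_torsion H"
      then obtain y where y: "y \<in> carrier G" "x = h y"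
        using surj by (auto simp: two_torsion_def)
      with x have "h (y \<otimes>\<^bsub>G\<^esub> y) = h \<one>\<^bsub>G\<^esub>"
        by (simp add: two_torsion_def)
      with inj y have "y \<otimes>\<^bsub>G\<^esub> y = \<one>\<^bsub>G\<^esub>"
        by (metis inj_onD h.G.m_closed h.G.one_closed)
      with y show "x \<in> h ` two_torsion G"
        by (auto simp: two_torsion_def)
    qed
  qed
qed

lemma card_two_torsion_iso:
  assumes "group G" "group H" "h \<in> iso G H"
  shows "card (two_torsion G) = card (two_torsion H)"
proof -
  have "inj_on h (two_torsion G)"
    using assms(3) by (auto simp: iso_def bij_betw_def two_torsion_def intro: inj_on_subset)
  then show ?thesis
    using two_torsion_iso_image[OF assms] card_image by metis
qed

lemma two_torsion_DirProd: "two_torsion (G \<times>\<times> H) = two_torsion G \<times> two_torsion H"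
  by (auto simp: two_torsion_def)

lemma two_torsion_product_group:
  "two_torsion (product_group I G) = (\<Pi>\<^sub>E i\<in>I. two_torsion (G i))"
  by (auto simp: two_torsion_def PiE_def Pi_def extensional_def fun_eq_iff restrict_def
      split: if_splits)

lemma two_torsion_integer_mod_group:
  assumes "0 < k"
  shows "two_torsion (integer_mod_group (2 * k)) = {0, int k}"
proof -
  have "int k dvd x \<longleftrightarrow> x = 0 \<or> x = int k" if "0 \<le> x" "x < int (2 * k)" for x
  proof
    assume "int k dvd x"
    then have "int k dvd x - int k" by simp
    with \<open>int k dvd x\<close> show "x = 0 \<or> x = int k"
      using that zdvd_not_zless[of x "int k"] zdvd_not_zless[of "x - int k" "int k"] by linarith
  qed auto
  then show ?thesis
    using assms by (auto simp: two_torsion_def carrier_integer_mod_group mod_eq_0_iff_dvd)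
qed

lemma card_two_torsion_cyclic_times_odd:
  assumes "\<forall>j<s. 1 \<le> i j" "group M1" "odd (card (carrier M1))"
  shows "card (two_torsion (product_group {..<s} (\<lambda>j. integer_mod_group (2 * i j)) \<times>\<times> M1)) = 2 ^ s"
proof -
  have "card (two_torsion (product_group {..<s} (\<lambda>j. integer_mod_group (2 * i j))))
      = (\<Prod>j<s. card (two_torsion (integer_mod_group (2 * i j))))"
    by (simp add: two_torsion_product_group card_PiE)
  also have "\<dots> = (\<Prod>j<s. 2)"
    using assms(1) by (intro prod.cong) (auto simp: two_torsion_integer_mod_group)
  also have "\<dots> = 2 ^ s"
    by simp
  finally show ?thesis
    using group.two_torsion_eq_if_odd[OF assms(2,3)] by (simp add: two_torsion_DirProd card_cartesian_product)
qed

theorem theorem4p13: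
  fixes M :: "('a, 'b) monoid_scheme"
  assumes "comm_group M" and "finite (carrier M)" and "group_exponent M > 2"
  shows "Half (LM M) =
           {Fplus M f' f'' u v | f' f'' u v. f' \<in> Aut klein \<and> f'' \<in> Aut M \<and>
               u \<in> carrier M \<and> v \<in> carrier M \<and> u \<otimes>\<^bsub>M\<^esub> u = \<one>\<^bsub>M\<^esub> \<and> v \<otimes>\<^bsub>M\<^esub> v = \<one>\<^bsub>M\<^esub>}
         \<union> {Fminus M f' f'' u v | f' f'' u v. f' \<in> Aut klein \<and> f'' \<in> Aut M \<and>
               u \<in> carrier M \<and> v \<in> carrier M \<and> u \<otimes>\<^bsub>M\<^esub> u = \<one>\<^bsub>M\<^esub> \<and> v \<otimes>\<^bsub>M\<^esub> v = \<one>\<^bsub>M\<^esub>}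
         \<and> (odd (card (carrier M)) \<longrightarrow>
              card (Half (LM M)) = 2 * card (Aut klein) * card (Aut M))
         \<and> (\<forall>(s::nat) (i::nat \<Rightarrow> nat) (M1 :: ('c, 'd) monoid_scheme).
              even (card (carrier M)) \<and> s \<ge> 1 \<and> (\<forall>j<s. i j \<ge> 1) \<and>
              group M1 \<and> finite (carrier M1) \<and> odd (card (carrier M1)) \<and>
              M \<cong> (product_group {..<s} (\<lambda>j. integer_mod_group (2 * i j)) \<times>\<times> M1) \<longrightarrow>
              card (Half (LM M)) = 2 ^ (2 * s + 1) * card (Aut klein) * card (Aut M))"
proof -
  interpret comm_group M by fact
  obtain z where z: "z \<in> carrier M" "z \<otimes>\<^bsub>M\<^esub> z \<noteq> \<one>\<^bsub>M\<^esub>"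
    using exists_square_neq_one assms(3) by blast
  note card_Half = card_Half_LM[OF assms(2) z]
  show ?thesis
  proof (intro conjI impI allI, goal_cases)
    case 1
    show ?case
      using Half_LM_eq[OF assms(2) z] by (simp add: two_torsion_def conj_ac)
  next
    case 2
    then show ?case
      using card_Half two_torsion_eq_if_odd by simp
  next
    case (3 s i M1)
    let ?H = "product_group {..<s} (\<lambda>j. integer_mod_group (2 * i j)) \<times>\<times> M1"
    from 3 obtain h where "h \<in> iso M ?H"
      by (auto simp: is_iso_def)
    moreover have "group ?H"
      using 3 by (intro DirProd_group product_group) simp_all
    ultimately have "card (two_torsion M) = card (two_torsion ?H)"
      by (intro card_two_torsion_iso is_group)
    also have "\<dots> = 2 ^ s"
      using 3 by (intro card_two_torsion_cyclic_times_odd) simp_all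
    finally have "card (two_torsion M) = 2 ^ s" .
    then show ?case
      using card_Half by (simp add: power_add power_mult power2_eq_square mult_ac)
  qed
qed

end
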